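(* Let $R$ be a right $\sigma$-reversible ring, where $\sigma$ is an endomorphism of $R$ with $\sigma(1)=1$. Then (1) $\sigma(e)=e$ for every idempotent $e\in R$; and (2) $R$ is abelian, i.e. every idempotent of $R$ is central.
   Context: All rings are associative with identity; $\sigma$ denotes a nonzero, non-identity ring endomorphism of $R$. $R$ is right $\sigma$-reversible if for all $a,b\in R$, $ab=0$ implies $b\sigma(a)=0$. *)

theory Defs
  imports Main
begin

definition ring_endo :: "('a::ring_1 \<Rightarrow> 'a) \<Rightarrow> bool" where
  "ring_endo \<sigma> \<longleftrightarrow> (\<forall>a b. \<sigma> (a + b) = \<sigma> a + \<sigma> b) \<and> (\<forall>a b. \<sigma> (a * b) = \<sigma> a * \<sigma> b)"

definition right_sigma_reversible :: "('a::ring_1 \<Rightarrow> 'a) \<Rightarrow> bool" where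
  "right_sigma_reversible \<sigma> \<longleftrightarrow> (\<forall>a b. a * b = 0 \<longrightarrow> b * \<sigma> a = 0)"

definition idempotent :: "'a::ring_1 \<Rightarrow> bool" where
  "idempotent e \<longleftrightarrow> e * e = e"

definition central :: "'a::ring_1 \<Rightarrow> bool" where
  "central e \<longleftrightarrow> (\<forall>r. e * r = r * e)"

definition abelian_ring :: "'a::ring_1 itself \<Rightarrow> bool" where
  "abelian_ring _ \<longleftrightarrow> (\<forall>e::'a. idempotent e \<longrightarrow> central e)"

end

theory Submission
  imports Defs
begin

(* The proof uses only that an idempotent e and its complement 1 - e annihilate
   each other on both sides.  Applying reversibility to e(1 - e) = 0 and to
   (1 - e)e = 0 gives sigma(e) = e sigma(e) and e = e sigma(e), hence sigma(e) = e.
   Applying it to e((1 - e)r) = 0 and (1 - e)(er) = 0 and using sigma(e) = e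
   gives re = ere = er, so e is central. *)

lemma additive_one_minus:
  fixes \<sigma> :: "'a::ring_1 \<Rightarrow> 'a"
  assumes add: "\<And>a b. \<sigma> (a + b) = \<sigma> a + \<sigma> b" and one: "\<sigma> 1 = 1"
  shows "\<sigma> (1 - x) = 1 - \<sigma> x"
proof -
  have "1 = \<sigma> (1 - x) + \<sigma> x" using add[of "1 - x" x] one by simp
  then show ?thesis by (simp add: algebra_simps)
qed

lemma idempotent_complement_orthogonal:
  fixes e :: "'a::ring_1"
  assumes "idempotent e"
  shows "e * (1 - e) = 0" and "(1 - e) * e = 0"
  using assms by (simp_all add: idempotent_def algebra_simps)

lemma reversible_fixes_idempotent:
  fixes \<sigma> :: "'a::ring_1 \<Rightarrow> 'a"
  assumes rev: "right_sigma_reversible \<sigma>"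
    and compl: "\<sigma> (1 - e) = 1 - \<sigma> e"
    and idem: "idempotent e"
  shows "\<sigma> e = e"
proof -
  have "(1 - e) * \<sigma> e = 0"
    using rev idempotent_complement_orthogonal(1)[OF idem]
    unfolding right_sigma_reversible_def by blast
  then have left: "\<sigma> e = e * \<sigma> e" by (simp add: algebra_simps)
  have "e * (1 - \<sigma> e) = 0"
    using rev idempotent_complement_orthogonal(2)[OF idem] compl
    unfolding right_sigma_reversible_def by metis
  then have right: "e = e * \<sigma> e" by (simp add: algebra_simps)
  from left right show ?thesis by simp
qed

lemma reversible_fixed_idempotent_central:
  fixes \<sigma> :: "'a::ring_1 \<Rightarrow> 'a"
  assumes rev: "right_sigma_reversible \<sigma>"
    and idem: "idempotent e"
    and fixed: "\<sigma> e = e" and fixed_compl: "\<sigma> (1 - e) = 1 - e"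
  shows "central e"
  unfolding central_def
proof
  fix r
  have R: "\<And>a b. a * b = 0 \<Longrightarrow> b * \<sigma> a = 0"
    using rev unfolding right_sigma_reversible_def by blast
  have "e * ((1 - e) * r) = 0"
    using idempotent_complement_orthogonal(1)[OF idem] by (simp flip: mult.assoc)
  then have "(1 - e) * r * e = 0" using R fixed by metis
  then have re: "r * e = e * r * e" by (simp add: algebra_simps)
  have "(1 - e) * (e * r) = 0"
    using idempotent_complement_orthogonal(2)[OF idem] by (simp flip: mult.assoc)
  then have "e * r * (1 - e) = 0" using R fixed_compl by metis
  then have er: "e * r = e * r * e"
    using idem by (simp add: algebra_simps idempotent_def flip: mult.assoc)
  from re er show "e * r = r * e" by simp
qed

theorem lemma3p1:
  fixes \<sigma> :: "'a::ring_1 \<Rightarrow> 'a"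
  assumes endo: "ring_endo \<sigma>"
    and nonzero: "\<sigma> \<noteq> (\<lambda>_. 0)"
    and nonid: "\<sigma> \<noteq> id"
    and one: "\<sigma> 1 = 1"
    and rev: "right_sigma_reversible \<sigma>"
  shows "(\<forall>e. idempotent e \<longrightarrow> \<sigma> e = e) \<and> abelian_ring TYPE('a)"
proof -
  have compl: "\<sigma> (1 - x) = 1 - \<sigma> x" for x
    using endo one by (intro additive_one_minus) (auto simp: ring_endo_def)
  have fixed: "\<sigma> e = e" if "idempotent e" for e
    using reversible_fixes_idempotent[OF rev compl that] .
  have "central e" if "idempotent e" for e :: 'a
    using reversible_fixed_idempotent_central[OF rev that]
      fixed[OF that] compl[of e] by simp
  with fixed show ?thesis unfolding abelian_ring_def by blast
qed

end
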